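(* Let $A$, $c$ be as in the context. If the system $yA\le c$ is totally dual integral, then $IP_{A,c}$ is a Gomory family.
   Context: $A\in\mathbb Z^{d\times n}$ has rank $d$, columns $a_1,\dots,a_n$, $cone(A)$ pointed, $\{x\in\mathbb R^n_{\ge0}:Ax=0\}=\{0\}$, $\mathbb ZA=\mathbb Z^d$, $\mathbb NA=\{Au:u\in\mathbb N^n\}$. For $c\in\mathbb Z^n$ and $b\in\mathbb NA$, $IP_{A,c}(b)=\min\{c\cdot x: Ax=b,\ x\in\mathbb N^n\}$; $IP_{A,c}$ is the family of these programs; for $b\in cone(A)$, $LP_{A,c}(b)=\min\{c\cdot x:Ax=b,\ x\ge0\}$. The system $yA\le c$ is totally dual integral if $LP_{A,c}(b)$ has an integral optimal solution for every $b\in cone(A)\cap\mathbb Z^d$. The regular triangulation $\Delta_c$ is the simplicial complex of all $\sigma\subseteq\{1,\dots,n\}$ for which some $y\in\mathbb R^d$ has $y\cdot a_j=c_j$ ($j\in\sigma$), $y\cdot a_j<c_j$ ($j\notin\sigma$). $c$ is generic: $\Delta_c$ is a triangulation and every $IP_{A,c}(b)$ has a unique optimal solution. For a maximal face $\sigma$ let $\tilde c_{\bar\sigma}=c_{\bar\sigma}-c_\sigma A_\sigma^{-1}A_{\bar\sigma}$; the (Gomory) group relaxation $G^\sigma(b)$ is $\min\{\tilde c_{\bar\sigma}\cdot x_{\bar\sigma}: A_\sigma x_\sigma+A_{\bar\sigma}x_{\bar\sigma}=b,\ x_{\bar\sigma}\ge0,\ x\in\mathbb Z^n\}$, and it solves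 $IP_{A,c}(b)$ if its optimal solution is non-negative. $IP_{A,c}$ is a Gomory family if for every $b\in\mathbb NA$ there is a maximal face $\sigma$ of $\Delta_c$ such that $G^\sigma(b)$ solves $IP_{A,c}(b)$. *)

theory Defs
  imports Complex_Main
begin

text \<open>The matrix A in Z^(d x n) is a function A :: nat => nat => int,
  with entries A i j for i < d, j < n; column j is a_j.  Vectors in R^n / Z^n / N^n
  are functions nat => _ supported on {..<n} (required explicitly where it matters);
  right-hand sides b are functions nat => _ of which only the coordinates i < d matter.\<close>

definition col_dot :: "(nat \<Rightarrow> nat \<Rightarrow> int) \<Rightarrow> nat \<Rightarrow> (nat \<Rightarrow> real) \<Rightarrow> nat \<Rightarrow> real" where
  "col_dot A d y j = (\<Sum>i<d. y i * of_int (A i j))"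

definition full_row_rank :: "(nat \<Rightarrow> nat \<Rightarrow> int) \<Rightarrow> nat \<Rightarrow> nat \<Rightarrow> bool" where
  "full_row_rank A d n \<longleftrightarrow> (\<forall>y. (\<forall>j<n. col_dot A d y j = 0) \<longrightarrow> (\<forall>i<d. y i = 0))"

definition ip_feasible :: "(nat \<Rightarrow> nat \<Rightarrow> int) \<Rightarrow> nat \<Rightarrow> nat \<Rightarrow> (nat \<Rightarrow> int) \<Rightarrow> (nat \<Rightarrow> nat) \<Rightarrow> bool" where
  "ip_feasible A d n b x \<longleftrightarrow> (\<forall>j\<ge>n. x j = 0) \<and> (\<forall>i<d. (\<Sum>j<n. A i j * int (x j)) = b i)"

definition ip_optimal :: "(nat \<Rightarrow> nat \<Rightarrow> int) \<Rightarrow> (nat \<Rightarrow> int) \<Rightarrow> nat \<Rightarrow> nat \<Rightarrow> (nat \<Rightarrow> int) \<Rightarrow> (nat \<Rightarrow> nat) \<Rightarrow> bool" where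
  "ip_optimal A c d n b x \<longleftrightarrow> ip_feasible A d n b x \<and>
     (\<forall>x'. ip_feasible A d n b x' \<longrightarrow> (\<Sum>j<n. c j * int (x j)) \<le> (\<Sum>j<n. c j * int (x' j)))"

definition NA :: "(nat \<Rightarrow> nat \<Rightarrow> int) \<Rightarrow> nat \<Rightarrow> nat \<Rightarrow> (nat \<Rightarrow> int) set" where
  "NA A d n = {b. \<exists>u. ip_feasible A d n b u}"

definition lp_feasible :: "(nat \<Rightarrow> nat \<Rightarrow> int) \<Rightarrow> nat \<Rightarrow> nat \<Rightarrow> (nat \<Rightarrow> real) \<Rightarrow> (nat \<Rightarrow> real) \<Rightarrow> bool" where
  "lp_feasible A d n b x \<longleftrightarrow> (\<forall>j\<ge>n. x j = 0) \<and> (\<forall>j<n. x j \<ge> 0) \<and>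
     (\<forall>i<d. (\<Sum>j<n. of_int (A i j) * x j) = b i)"

definition lp_optimal :: "(nat \<Rightarrow> nat \<Rightarrow> int) \<Rightarrow> (nat \<Rightarrow> int) \<Rightarrow> nat \<Rightarrow> nat \<Rightarrow> (nat \<Rightarrow> real) \<Rightarrow> (nat \<Rightarrow> real) \<Rightarrow> bool" where
  "lp_optimal A c d n b x \<longleftrightarrow> lp_feasible A d n b x \<and>
     (\<forall>x'. lp_feasible A d n b x' \<longrightarrow> (\<Sum>j<n. of_int (c j) * x j) \<le> (\<Sum>j<n. of_int (c j) * x' j))"

definition coneA :: "(nat \<Rightarrow> nat \<Rightarrow> int) \<Rightarrow> nat \<Rightarrow> nat \<Rightarrow> (nat \<Rightarrow> real) set" where
  "coneA A d n = {b. \<exists>x. lp_feasible A d n b x}"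

definition pointed_cone :: "(nat \<Rightarrow> nat \<Rightarrow> int) \<Rightarrow> nat \<Rightarrow> nat \<Rightarrow> bool" where
  "pointed_cone A d n \<longleftrightarrow>
     (\<forall>b. b \<in> coneA A d n \<and> (\<lambda>i. - b i) \<in> coneA A d n \<longrightarrow> (\<forall>i<d. b i = 0))"

definition TDI :: "(nat \<Rightarrow> nat \<Rightarrow> int) \<Rightarrow> (nat \<Rightarrow> int) \<Rightarrow> nat \<Rightarrow> nat \<Rightarrow> bool" where
  "TDI A c d n \<longleftrightarrow>
     (\<forall>b::nat \<Rightarrow> int. (\<lambda>i. real_of_int (b i)) \<in> coneA A d n \<longrightarrow>
        (\<exists>x. lp_optimal A c d n (\<lambda>i. real_of_int (b i)) x \<and> (\<forall>j. x j \<in> \<int>)))"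

definition regular_subdivision :: "(nat \<Rightarrow> nat \<Rightarrow> int) \<Rightarrow> (nat \<Rightarrow> int) \<Rightarrow> nat \<Rightarrow> nat \<Rightarrow> nat set set" where
  "regular_subdivision A c d n =
     {\<sigma>. \<sigma> \<subseteq> {..<n} \<and> (\<exists>y. (\<forall>j\<in>\<sigma>. col_dot A d y j = of_int (c j)) \<and>
                              (\<forall>j\<in>{..<n} - \<sigma>. col_dot A d y j < of_int (c j)))}"

definition cols_lin_indep :: "(nat \<Rightarrow> nat \<Rightarrow> int) \<Rightarrow> nat \<Rightarrow> nat set \<Rightarrow> bool" where
  "cols_lin_indep A d \<sigma> \<longleftrightarrow>
     (\<forall>w::nat \<Rightarrow> real. (\<forall>i<d. (\<Sum>j\<in>\<sigma>. w j * of_int (A i j)) = 0) \<longrightarrow> (\<forall>j\<in>\<sigma>. w j = 0))"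

definition is_triangulation :: "(nat \<Rightarrow> nat \<Rightarrow> int) \<Rightarrow> (nat \<Rightarrow> int) \<Rightarrow> nat \<Rightarrow> nat \<Rightarrow> bool" where
  "is_triangulation A c d n \<longleftrightarrow> (\<forall>\<sigma>\<in>regular_subdivision A c d n. cols_lin_indep A d \<sigma>)"

definition generic_cost :: "(nat \<Rightarrow> nat \<Rightarrow> int) \<Rightarrow> (nat \<Rightarrow> int) \<Rightarrow> nat \<Rightarrow> nat \<Rightarrow> bool" where
  "generic_cost A c d n \<longleftrightarrow> is_triangulation A c d n \<and>
     (\<forall>b\<in>NA A d n. \<exists>!x. ip_optimal A c d n b x)"

definition maximal_face :: "(nat \<Rightarrow> nat \<Rightarrow> int) \<Rightarrow> (nat \<Rightarrow> int) \<Rightarrow> nat \<Rightarrow> nat \<Rightarrow> nat set \<Rightarrow> bool" where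
  "maximal_face A c d n \<sigma> \<longleftrightarrow> \<sigma> \<in> regular_subdivision A c d n \<and>
     (\<forall>\<tau>\<in>regular_subdivision A c d n. \<sigma> \<subseteq> \<tau> \<longrightarrow> \<tau> = \<sigma>)"

(* c_sigma A_sigma^{-1}: the unique y in R^d with y a_j = c_j for j in sigma *)
definition dual_point :: "(nat \<Rightarrow> nat \<Rightarrow> int) \<Rightarrow> (nat \<Rightarrow> int) \<Rightarrow> nat \<Rightarrow> nat set \<Rightarrow> nat \<Rightarrow> real" where
  "dual_point A c d \<sigma> = (THE y. (\<forall>i\<ge>d. y i = 0) \<and> (\<forall>j\<in>\<sigma>. col_dot A d y j = of_int (c j)))"

definition reduced_cost :: "(nat \<Rightarrow> nat \<Rightarrow> int) \<Rightarrow> (nat \<Rightarrow> int) \<Rightarrow> nat \<Rightarrow> nat set \<Rightarrow> nat \<Rightarrow> real" where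
  "reduced_cost A c d \<sigma> j = of_int (c j) - col_dot A d (dual_point A c d \<sigma>) j"

definition group_feasible :: "(nat \<Rightarrow> nat \<Rightarrow> int) \<Rightarrow> nat \<Rightarrow> nat \<Rightarrow> nat set \<Rightarrow> (nat \<Rightarrow> int) \<Rightarrow> (nat \<Rightarrow> int) \<Rightarrow> bool" where
  "group_feasible A d n \<sigma> b x \<longleftrightarrow> (\<forall>j\<ge>n. x j = 0) \<and> (\<forall>j\<in>{..<n} - \<sigma>. x j \<ge> 0) \<and>
     (\<forall>i<d. (\<Sum>j<n. A i j * x j) = b i)"

definition group_optimal :: "(nat \<Rightarrow> nat \<Rightarrow> int) \<Rightarrow> (nat \<Rightarrow> int) \<Rightarrow> nat \<Rightarrow> nat \<Rightarrow> nat set \<Rightarrow> (nat \<Rightarrow> int) \<Rightarrow> (nat \<Rightarrow> int) \<Rightarrow> bool" where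
  "group_optimal A c d n \<sigma> b x \<longleftrightarrow> group_feasible A d n \<sigma> b x \<and>
     (\<forall>x'. group_feasible A d n \<sigma> b x' \<longrightarrow>
        (\<Sum>j\<in>{..<n} - \<sigma>. reduced_cost A c d \<sigma> j * of_int (x j))
          \<le> (\<Sum>j\<in>{..<n} - \<sigma>. reduced_cost A c d \<sigma> j * of_int (x' j)))"

(* G^sigma(b) solves IP_{A,c}(b): its optimal solution is non-negative *)
definition group_solves :: "(nat \<Rightarrow> nat \<Rightarrow> int) \<Rightarrow> (nat \<Rightarrow> int) \<Rightarrow> nat \<Rightarrow> nat \<Rightarrow> nat set \<Rightarrow> (nat \<Rightarrow> int) \<Rightarrow> bool" where
  "group_solves A c d n \<sigma> b \<longleftrightarrow> (\<exists>x. group_optimal A c d n \<sigma> b x \<and> (\<forall>j. x j \<ge> 0))"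

definition gomory_family :: "(nat \<Rightarrow> nat \<Rightarrow> int) \<Rightarrow> (nat \<Rightarrow> int) \<Rightarrow> nat \<Rightarrow> nat \<Rightarrow> bool" where
  "gomory_family A c d n \<longleftrightarrow>
     (\<forall>b\<in>NA A d n. \<exists>\<sigma>. maximal_face A c d n \<sigma> \<and> group_solves A c d n \<sigma> b)"

end

theory Submission
  imports Defs
begin

text \<open>Total dual integrality gives an integral optimal solution \<open>x\<close> of the linear relaxation
  \<open>LP\<^sub>A\<^sub>,\<^sub>c(b)\<close>. By LP duality (derived from Farkas' lemma) some dual feasible \<open>y\<close> is tight on
  the support of \<open>x\<close>; the tight set of \<open>y\<close> is a cell of \<open>\<Delta>\<^sub>c\<close>, contained in a maximal cell \<open>\<sigma>\<close>.
  The columns of a maximal cell span, so the reduced costs of \<open>\<sigma>\<close> are positive off \<open>\<sigma>\<close>, while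
  \<open>x\<close> is supported on \<open>\<sigma>\<close> and has reduced cost 0. Hence \<open>x\<close> itself is an optimal, non-negative
  solution of \<open>G\<^sup>\<sigma>(b)\<close>.\<close>

section \<open>Farkas' lemma\<close>

definition vdot :: "nat \<Rightarrow> (nat \<Rightarrow> real) \<Rightarrow> (nat \<Rightarrow> real) \<Rightarrow> real" where
  "vdot D y v = (\<Sum>i<D. y i * v i)"

definition in_cone :: "nat \<Rightarrow> ('j \<Rightarrow> nat \<Rightarrow> real) \<Rightarrow> 'j set \<Rightarrow> (nat \<Rightarrow> real) \<Rightarrow> bool" where
  "in_cone D a J b \<longleftrightarrow> (\<exists>l. (\<forall>j\<in>J. l j \<ge> 0) \<and> (\<forall>i<D. b i = (\<Sum>j\<in>J. l j * a j i)))"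

definition separates :: "nat \<Rightarrow> ('j \<Rightarrow> nat \<Rightarrow> real) \<Rightarrow> 'j set \<Rightarrow> (nat \<Rightarrow> real) \<Rightarrow> (nat \<Rightarrow> real) \<Rightarrow> bool" where
  "separates D a J b y \<longleftrightarrow> (\<forall>j\<in>J. vdot D y (a j) \<le> 0) \<and> vdot D y b > 0"

text \<open>\<open>project D y u v = (y\<cdot>u) v - (y\<cdot>v) u\<close> lies in the hyperplane \<open>y\<^sup>\<bottom>\<close>; passing to these
  projections eliminates the generator \<open>u\<close>, which is the Fourier-Motzkin step in the proof
  of Farkas' lemma.\<close>
definition project :: "nat \<Rightarrow> (nat \<Rightarrow> real) \<Rightarrow> (nat \<Rightarrow> real) \<Rightarrow> (nat \<Rightarrow> real) \<Rightarrow> nat \<Rightarrow> real" where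
  "project D y u v = (\<lambda>i. vdot D y u * v i - vdot D y v * u i)"

lemma vdot_diff_scaled_left: "vdot D (\<lambda>i. z i - r * y i) v = vdot D z v - r * vdot D y v"
  by (simp add: vdot_def algebra_simps sum_subtractf sum_distrib_left)

lemma vdot_diff_scaled_right: "vdot D z (\<lambda>i. p * v i - q * u i) = p * vdot D z v - q * vdot D z u"
  by (simp add: vdot_def algebra_simps sum_subtractf sum_distrib_left)

lemma vdot_project_right: "vdot D z (project D y u v) = vdot D y u * vdot D z v - vdot D y v * vdot D z u"
  unfolding project_def by (rule vdot_diff_scaled_right)

lemma vdot_project:
  assumes "vdot D y u \<noteq> 0"
  shows "vdot D (\<lambda>i. z i - vdot D z u / vdot D y u * y i) v = vdot D z (project D y u v) / vdot D y u"
  using assms by (simp only: vdot_diff_scaled_left vdot_project_right) (simp add: field_simps)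

lemma vdot_uminus_right: "vdot D y (\<lambda>i. - v i) = - vdot D y v"
  by (simp add: vdot_def sum_negf)

lemma vdot_self_pos:
  assumes "i < D" "b i \<noteq> 0"
  shows "vdot D b b > 0"
proof -
  have "b i * b i \<le> (\<Sum>i<D. b i * b i)"
    using assms by (intro member_le_sum) auto
  moreover have "b i * b i > 0" using assms(2) by (metis not_real_square_gt_zero)
  ultimately show ?thesis by (simp add: vdot_def)
qed

lemma in_cone_mono:
  assumes "in_cone D a J b" "J \<subseteq> K" "finite K"
  shows "in_cone D a K b"
proof -
  obtain l where l: "\<forall>j\<in>J. l j \<ge> 0" "\<forall>i<D. b i = (\<Sum>j\<in>J. l j * a j i)"
    using assms(1) by (auto simp: in_cone_def)
  define l' where "l' j = (if j \<in> J then l j else 0)" for j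
  have "(\<Sum>j\<in>J. l j * a j i) = (\<Sum>j\<in>K. l' j * a j i)" for i
    using assms(2,3) by (intro sum.mono_neutral_cong_left) (auto simp: l'_def)
  then show ?thesis
    using l unfolding in_cone_def by (intro exI[of _ l']) (auto simp: l'_def)
qed

lemma in_cone_unproject:
  assumes pos: "vdot D y (a m) > 0" and y: "\<forall>j\<in>J. vdot D y (a j) \<le> 0" "vdot D y b \<ge> 0"
    and "finite J" "m \<notin> J"
    and cone: "in_cone D (\<lambda>j. project D y (a m) (a j)) J (project D y (a m) b)"
  shows "in_cone D a (insert m J) b"
proof -
  define u where "u = a m"
  define p where "p = vdot D y u"
  have p: "p > 0" using pos by (simp add: p_def u_def)
  obtain mu where mu: "\<forall>j\<in>J. mu j \<ge> 0"
    and comb: "\<forall>i<D. p * b i - vdot D y b * u i = (\<Sum>j\<in>J. mu j * (p * a j i - vdot D y (a j) * u i))"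
    using cone by (auto simp: in_cone_def project_def p_def u_def)
  define lm where "lm = (vdot D y b - (\<Sum>j\<in>J. mu j * vdot D y (a j))) / p"
  have "(\<Sum>j\<in>J. mu j * vdot D y (a j)) \<le> 0"
    using mu y(1) by (intro sum_nonpos) (simp add: mult_nonneg_nonpos)
  then have "lm \<ge> 0" using p y(2) by (simp add: lm_def)
  have "b i = (\<Sum>j\<in>J. mu j * a j i) + lm * u i" if "i < D" for i
  proof -
    have "p * b i - vdot D y b * u i = p * (\<Sum>j\<in>J. mu j * a j i) - (\<Sum>j\<in>J. mu j * vdot D y (a j)) * u i"
      using comb that by (simp add: algebra_simps sum_subtractf sum_distrib_left sum_distrib_right)
    moreover have "p * lm = vdot D y b - (\<Sum>j\<in>J. mu j * vdot D y (a j))"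
      using p by (simp add: lm_def)
    then have "p * lm * u i = vdot D y b * u i - (\<Sum>j\<in>J. mu j * vdot D y (a j)) * u i"
      by (simp add: left_diff_distrib)
    ultimately have "p * b i = p * (\<Sum>j\<in>J. mu j * a j i) + p * (lm * u i)"
      by linarith
    then show ?thesis using p by (simp flip: distrib_left)
  qed
  moreover have "(\<Sum>j\<in>J. (mu(m := lm)) j * a j i) = (\<Sum>j\<in>J. mu j * a j i)" for i
    using \<open>m \<notin> J\<close> by (intro sum.cong) auto
  ultimately have "\<forall>i<D. b i = (\<Sum>j\<in>insert m J. (mu(m := lm)) j * a j i)"
    using \<open>finite J\<close> \<open>m \<notin> J\<close> by (simp add: u_def)
  moreover have "\<forall>j\<in>insert m J. (mu(m := lm)) j \<ge> 0" using mu \<open>lm \<ge> 0\<close> by auto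
  ultimately show ?thesis unfolding in_cone_def by blast
qed

lemma separates_unproject:
  assumes p: "vdot D y (a m) > 0"
    and z: "separates D (\<lambda>j. project D y (a m) (a j)) J (project D y (a m) b) z"
  shows "separates D a (insert m J) b (\<lambda>i. z i - vdot D z (a m) / vdot D y (a m) * y i)"
  using z p by (auto simp: separates_def vdot_project vdot_project_right divide_nonpos_pos
                     simp del: times_divide_eq_left)

lemma farkas:
  assumes "finite J"
  shows "in_cone D a J b \<or> (\<exists>y. separates D a J b y)"
  using assms
proof (induction J arbitrary: a b rule: finite_induct)
  case empty
  show ?case
  proof (cases "\<forall>i<D. b i = 0")
    case True
    then show ?thesis by (auto simp: in_cone_def)
  next
    case False
    then show ?thesis using vdot_self_pos by (auto simp: separates_def)
  qed
next
  case (insert m J)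
  consider "in_cone D a J b" | y where "separates D a J b y"
    using insert.IH by blast
  then show ?case
  proof cases
    case 1
    then show ?thesis using in_cone_mono insert.hyps by blast
  next
    case (2 y)
    show ?thesis
    proof (cases "vdot D y (a m) \<le> 0")
      case True
      then show ?thesis using 2 by (auto simp: separates_def)
    next
      case False
      then have p: "vdot D y (a m) > 0" by simp
      consider "in_cone D (\<lambda>j. project D y (a m) (a j)) J (project D y (a m) b)"
        | z where "separates D (\<lambda>j. project D y (a m) (a j)) J (project D y (a m) b) z"
        using insert.IH by blast
      then show ?thesis
      proof cases
        case 1
        then show ?thesis
          using in_cone_unproject[of D y a m J b] p insert.hyps 2 by (auto simp: separates_def)
      next
        case (2 z)
        then show ?thesis using separates_unproject[of D y a m J b z] p by blast
      qed
    qed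
  qed
qed

section \<open>Complementary slackness\<close>

lemma lp_optimal_cost_nonneg_direction:
  fixes v :: "nat \<Rightarrow> real"
  assumes opt: "lp_optimal A c d n b x"
    and v: "\<forall>j\<ge>n. v j = 0" "\<forall>j<n. x j = 0 \<longrightarrow> v j \<ge> 0"
      "\<forall>i<d. (\<Sum>j<n. of_int (A i j) * v j) = 0"
  shows "(\<Sum>j<n. of_int (c j) * v j) \<ge> 0"
proof -
  have feas: "lp_feasible A d n b x" using opt by (simp add: lp_optimal_def)
  define S where "S = {j. j < n \<and> x j > 0}"
  define eps where "eps = Min (insert 1 ((\<lambda>j. x j / (\<bar>v j\<bar> + 1)) ` S))"
  have "finite S" by (simp add: S_def)
  then have eps_pos: "eps > 0" unfolding eps_def by (subst Min_gr_iff) (auto simp: S_def)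
  have "x j + eps * v j \<ge> 0" if "j < n" for j
  proof (cases "j \<in> S")
    case True
    have "eps \<le> x j / (\<bar>v j\<bar> + 1)" unfolding eps_def using \<open>finite S\<close> True by (intro Min_le) auto
    then have "eps * (\<bar>v j\<bar> + 1) \<le> x j" by (simp add: pos_le_divide_eq add_pos_nonneg)
    moreover have "- (eps * v j) \<le> eps * \<bar>v j\<bar>"
      using eps_pos mult_left_mono[of "- v j" "\<bar>v j\<bar>" eps] by simp
    ultimately show ?thesis using eps_pos by (simp add: algebra_simps)
  next
    case False
    then have "x j = 0" using feas that by (auto simp: S_def lp_feasible_def order_le_less)
    then show ?thesis using v(2) that eps_pos by simp
  qed
  moreover have "(\<Sum>j<n. of_int (A i j) * (x j + eps * v j)) = b i" if "i < d" for i
    using v(3) feas that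
    by (simp add: lp_feasible_def algebra_simps sum.distrib flip: sum_distrib_left)
  ultimately have "lp_feasible A d n b (\<lambda>j. x j + eps * v j)"
    using feas v(1) by (simp add: lp_feasible_def)
  then have "(\<Sum>j<n. of_int (c j) * x j) \<le> (\<Sum>j<n. of_int (c j) * (x j + eps * v j))"
    using opt by (simp add: lp_optimal_def)
  also have "\<dots> = (\<Sum>j<n. of_int (c j) * x j) + eps * (\<Sum>j<n. of_int (c j) * v j)"
    by (simp add: algebra_simps sum.distrib sum_distrib_left)
  finally show ?thesis using eps_pos by (simp add: zero_le_mult_iff)
qed

text \<open>Columns \<open>(a\<^sub>k, -c\<^sub>k)\<close> of the homogenised system. At an optimal \<open>x\<close> the last unit vector is
  no conic combination of these columns and the negated columns of the support of \<open>x\<close> (that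
  would be an improving direction), so Farkas' lemma yields the complementary dual solution.\<close>
definition lifted_col :: "(nat \<Rightarrow> nat \<Rightarrow> int) \<Rightarrow> (nat \<Rightarrow> int) \<Rightarrow> nat \<Rightarrow> nat \<Rightarrow> nat \<Rightarrow> real" where
  "lifted_col A c d k i = (if i < d then of_int (A i k) else - of_int (c k))"

lemma vdot_lifted_col: "vdot (Suc d) y (lifted_col A c d k) = col_dot A d y k - y d * of_int (c k)"
  by (simp add: vdot_def lifted_col_def col_dot_def)

lemma lp_optimal_not_in_cone_lifted:
  assumes opt: "lp_optimal A c d n b x" and S: "S = {j. j < n \<and> x j > 0}"
  shows "\<not> in_cone (Suc d) (case_sum (lifted_col A c d) (\<lambda>k i. - lifted_col A c d k i))
           ({..<n} <+> S) (\<lambda>i. if i = d then 1 else 0)"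
proof
  assume "in_cone (Suc d) (case_sum (lifted_col A c d) (\<lambda>k i. - lifted_col A c d k i))
           ({..<n} <+> S) (\<lambda>i. if i = d then 1 else 0)"
  then obtain l where l: "\<forall>k\<in>{..<n} <+> S. l k \<ge> 0"
    and comb: "\<forall>i<Suc d. (if i = d then 1 else 0) = (\<Sum>k\<in>{..<n} <+> S.
                 l k * case_sum (lifted_col A c d) (\<lambda>k i. - lifted_col A c d k i) k i)"
    by (auto simp: in_cone_def)
  define v where "v k = (if k < n then l (Inl k) - (if k \<in> S then l (Inr k) else 0) else 0)" for k
  have "finite S" using S by simp
  have sum_v: "(if i = d then 1 else 0) = (\<Sum>k<n. v k * lifted_col A c d k i)" if "i < Suc d" for i
  proof -
    have "(\<Sum>k\<in>S. l (Inr k) * - lifted_col A c d k i)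
        = (\<Sum>k<n. (if k \<in> S then l (Inr k) else 0) * - lifted_col A c d k i)"
      using S by (intro sum.mono_neutral_cong_left) auto
    then show ?thesis
      using comb that \<open>finite S\<close>
      by (simp add: sum.Plus v_def algebra_simps sum.distrib[symmetric] sum_subtractf[symmetric])
  qed
  have "\<forall>i<d. (\<Sum>k<n. of_int (A i k) * v k) = 0"
  proof (intro allI impI)
    fix i assume "i < d"
    then show "(\<Sum>k<n. of_int (A i k) * v k) = 0"
      using sum_v[of i] by (simp add: lifted_col_def mult.commute)
  qed
  moreover have "\<forall>k<n. x k = 0 \<longrightarrow> v k \<ge> 0"
    using l S by (auto simp: v_def)
  moreover have "\<forall>k\<ge>n. v k = 0" by (simp add: v_def)
  ultimately have "(\<Sum>k<n. of_int (c k) * v k) \<ge> 0"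
    using lp_optimal_cost_nonneg_direction[OF opt] by blast
  moreover have "1 = - (\<Sum>k<n. of_int (c k) * v k)"
    using sum_v[of d] by (simp add: lifted_col_def sum_negf mult.commute)
  ultimately show False by linarith
qed

lemma lp_optimal_complementary_dual:
  assumes opt: "lp_optimal A c d n b x"
  shows "\<exists>y. (\<forall>j<n. col_dot A d y j \<le> of_int (c j)) \<and>
             (\<forall>j<n. x j > 0 \<longrightarrow> col_dot A d y j = of_int (c j))"
proof -
  define S where "S = {j. j < n \<and> x j > 0}"
  define g where "g = case_sum (lifted_col A c d) (\<lambda>k i. - lifted_col A c d k i)"
  have "finite ({..<n} <+> S)" by (simp add: S_def)
  then obtain y where y: "separates (Suc d) g ({..<n} <+> S) (\<lambda>i. if i = d then 1 else 0) y"
    using farkas lp_optimal_not_in_cone_lifted[OF opt S_def] unfolding g_def by blast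
  have yd: "y d > 0" using y by (simp add: separates_def vdot_def)
  have le: "col_dot A d y k \<le> y d * of_int (c k)" if "k < n" for k
    using y that by (force simp: separates_def g_def vdot_lifted_col)
  have ge: "col_dot A d y k \<ge> y d * of_int (c k)" if "k \<in> S" for k
    using y that by (force simp: separates_def g_def vdot_lifted_col vdot_uminus_right)
  define y' where "y' i = y i / y d" for i
  have y': "col_dot A d y' k = col_dot A d y k / y d" for k
    by (simp add: col_dot_def y'_def sum_divide_distrib)
  have "\<forall>j<n. col_dot A d y' j \<le> of_int (c j)"
    using le yd by (simp add: y' pos_divide_le_eq mult.commute)
  moreover have "\<forall>j<n. x j > 0 \<longrightarrow> col_dot A d y' j = of_int (c j)"
    using le ge yd by (force simp: y' S_def)
  ultimately show ?thesis by blast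
qed

section \<open>Maximal cells of the regular subdivision\<close>

lemma col_dot_add_scaled: "col_dot A d (\<lambda>i. y i + t * z i) j = col_dot A d y j + t * col_dot A d z j"
  by (simp add: col_dot_def algebra_simps sum.distrib sum_distrib_left)

lemma col_dot_diff: "col_dot A d (\<lambda>i. y i - z i) j = col_dot A d y j - col_dot A d z j"
  by (simp add: col_dot_def algebra_simps sum_subtractf)

lemma col_dot_uminus: "col_dot A d (\<lambda>i. - z i) j = - col_dot A d z j"
  by (simp add: col_dot_def sum_negf)

lemma col_dot_restrict: "col_dot A d (\<lambda>i. if i < d then y i else 0) j = col_dot A d y j"
  by (simp add: col_dot_def)

lemma tight_set_mem_regular_subdivision:
  assumes "\<forall>j<n. col_dot A d y j \<le> of_int (c j)"
  shows "{j. j < n \<and> col_dot A d y j = of_int (c j)} \<in> regular_subdivision A c d n"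
  unfolding regular_subdivision_def using assms
  by (auto intro!: exI[of _ y] simp: order_less_le)

lemma exists_maximal_face_superset:
  assumes "\<tau> \<in> regular_subdivision A c d n"
  obtains \<sigma> where "maximal_face A c d n \<sigma>" "\<tau> \<subseteq> \<sigma>"
proof -
  have "regular_subdivision A c d n \<subseteq> Pow {..<n}" by (auto simp: regular_subdivision_def)
  then have "finite (regular_subdivision A c d n)" by (rule finite_subset) simp
  then show ?thesis
    using finite_has_maximal2[OF _ assms] that by (auto simp: maximal_face_def)
qed

text \<open>Move the witness \<open>y\<close> of the cell along \<open>z\<close> until the first new inequality becomes tight.\<close>
lemma regular_subdivision_extend:
  assumes \<sigma>: "\<sigma> \<in> regular_subdivision A c d n"
    and z0: "\<forall>j\<in>\<sigma>. col_dot A d z j = 0" and j0: "j0 < n" "col_dot A d z j0 > 0"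
  obtains \<tau> where "\<tau> \<in> regular_subdivision A c d n" "\<sigma> \<subset> \<tau>"
proof -
  obtain y where y_eq: "\<forall>j\<in>\<sigma>. col_dot A d y j = of_int (c j)"
    and y_less: "\<forall>j\<in>{..<n} - \<sigma>. col_dot A d y j < of_int (c j)" and "\<sigma> \<subseteq> {..<n}"
    using \<sigma> by (auto simp: regular_subdivision_def)
  define P where "P = {j. j < n \<and> j \<notin> \<sigma> \<and> col_dot A d z j > 0}"
  define r where "r j = (of_int (c j) - col_dot A d y j) / col_dot A d z j" for j
  have "finite P" "j0 \<in> P" using j0 z0 by (auto simp: P_def)
  then obtain jm where jm: "jm \<in> P" and r_min: "\<forall>j\<in>P. r jm \<le> r j"
    using arg_min_if_finite(1)[of P r] arg_min_least[of P _ r] by blast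
  define t where "t = r jm"
  have "t > 0" using jm y_less by (auto simp: P_def r_def t_def)
  define y' where "y' i = y i + t * z i" for i
  have y': "col_dot A d y' j = col_dot A d y j + t * col_dot A d z j" for j
    unfolding y'_def by (rule col_dot_add_scaled)
  have "col_dot A d y' j \<le> of_int (c j)" if "j < n" for j
  proof (cases "j \<in> P")
    case True
    then have "t * col_dot A d z j \<le> of_int (c j) - col_dot A d y j"
      using r_min by (auto simp: P_def r_def t_def pos_le_divide_eq)
    then show ?thesis by (simp add: y')
  next
    case False
    show ?thesis
    proof (cases "j \<in> \<sigma>")
      case True
      then show ?thesis using y_eq z0 by (simp add: y')
    next
      case False
      then have "t * col_dot A d z j \<le> 0"
        using \<open>j \<notin> P\<close> \<open>t > 0\<close> that by (simp add: P_def mult_nonneg_nonpos)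
      moreover have "col_dot A d y j < of_int (c j)" using y_less that False by simp
      ultimately show ?thesis by (simp add: y')
    qed
  qed
  then have "{j. j < n \<and> col_dot A d y' j = of_int (c j)} \<in> regular_subdivision A c d n"
    by (intro tight_set_mem_regular_subdivision) auto
  moreover have "\<sigma> \<subseteq> {j. j < n \<and> col_dot A d y' j = of_int (c j)}"
    using \<open>\<sigma> \<subseteq> {..<n}\<close> y_eq z0 by (auto simp: y')
  moreover have "jm \<in> {j. j < n \<and> col_dot A d y' j = of_int (c j)} - \<sigma>"
    using jm by (auto simp: P_def y' t_def r_def)
  ultimately show ?thesis using that by blast
qed

lemma maximal_face_col_dot_nonpos:
  assumes mf: "maximal_face A c d n \<sigma>" and z0: "\<forall>j\<in>\<sigma>. col_dot A d z j = 0" and "j < n"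
  shows "col_dot A d z j \<le> 0"
proof (rule ccontr)
  assume "\<not> col_dot A d z j \<le> 0"
  then obtain \<tau> where "\<tau> \<in> regular_subdivision A c d n" "\<sigma> \<subset> \<tau>"
    using regular_subdivision_extend[of \<sigma> A c d n z j] mf z0 \<open>j < n\<close> by (auto simp: maximal_face_def)
  then show False using mf by (auto simp: maximal_face_def)
qed

lemma maximal_face_spanning:
  assumes mf: "maximal_face A c d n \<sigma>" and rank: "full_row_rank A d n"
    and z0: "\<forall>j\<in>\<sigma>. col_dot A d z j = 0"
  shows "\<forall>i<d. z i = 0"
proof -
  have "col_dot A d z j = 0" if "j < n" for j
    using maximal_face_col_dot_nonpos[OF mf z0 that]
      maximal_face_col_dot_nonpos[OF mf _ that, of "\<lambda>i. - z i"] z0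
    by (simp add: col_dot_uminus)
  then show ?thesis using rank by (simp add: full_row_rank_def)
qed

lemma col_dot_dual_point:
  assumes mf: "maximal_face A c d n \<sigma>" and rank: "full_row_rank A d n"
    and y: "\<forall>j\<in>\<sigma>. col_dot A d y j = of_int (c j)"
  shows "col_dot A d (dual_point A c d \<sigma>) j = col_dot A d y j"
proof -
  define y0 where "y0 = (\<lambda>i. if i < d then y i else 0)"
  have "dual_point A c d \<sigma> = y0"
    unfolding dual_point_def
  proof (rule the_equality)
    show "(\<forall>i\<ge>d. y0 i = 0) \<and> (\<forall>j\<in>\<sigma>. col_dot A d y0 j = of_int (c j))"
      using y by (simp add: y0_def col_dot_restrict)
  next
    fix y' assume y': "(\<forall>i\<ge>d. y' i = 0) \<and> (\<forall>j\<in>\<sigma>. col_dot A d y' j = of_int (c j))"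
    then have "\<forall>j\<in>\<sigma>. col_dot A d (\<lambda>i. y' i - y0 i) j = 0"
      using y by (simp add: col_dot_diff y0_def col_dot_restrict)
    then have "\<forall>i<d. y' i - y0 i = 0" by (rule maximal_face_spanning[OF mf rank])
    then show "y' = y0" using y' by (auto simp: y0_def fun_eq_iff)
  qed
  then show ?thesis by (simp add: y0_def col_dot_restrict)
qed

lemma reduced_cost_pos:
  assumes mf: "maximal_face A c d n \<sigma>" and rank: "full_row_rank A d n"
    and j: "j \<in> {..<n} - \<sigma>"
  shows "reduced_cost A c d \<sigma> j > 0"
proof -
  obtain y where "\<forall>j\<in>\<sigma>. col_dot A d y j = of_int (c j)"
    and "\<forall>j\<in>{..<n} - \<sigma>. col_dot A d y j < of_int (c j)"
    using mf by (auto simp: maximal_face_def regular_subdivision_def)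
  then show ?thesis
    using j col_dot_dual_point[OF mf rank] by (simp add: reduced_cost_def)
qed

lemma lp_optimal_support_in_maximal_face:
  assumes "lp_optimal A c d n b x"
  obtains \<sigma> where "maximal_face A c d n \<sigma>" "\<forall>j\<in>{..<n} - \<sigma>. x j = 0"
proof -
  obtain y where y_le: "\<forall>j<n. col_dot A d y j \<le> of_int (c j)"
    and y_eq: "\<forall>j<n. x j > 0 \<longrightarrow> col_dot A d y j = of_int (c j)"
    using lp_optimal_complementary_dual[OF assms] by blast
  obtain \<sigma> where mf: "maximal_face A c d n \<sigma>"
    and tight: "{j. j < n \<and> col_dot A d y j = of_int (c j)} \<subseteq> \<sigma>"
    using exists_maximal_face_superset[OF tight_set_mem_regular_subdivision[OF y_le]] by blast
  have "x j \<ge> 0" if "j < n" for j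
    using assms that by (simp add: lp_optimal_def lp_feasible_def)
  then have "\<forall>j\<in>{..<n} - \<sigma>. x j = 0"
    using y_eq tight by (force simp: order_le_less)
  with mf show ?thesis using that by blast
qed

section \<open>Group relaxations\<close>

lemma group_solves_if_integral_lp_feasible:
  assumes mf: "maximal_face A c d n \<sigma>" and rank: "full_row_rank A d n"
    and feas: "lp_feasible A d n (\<lambda>i. of_int (b i)) x" and int: "\<forall>j. x j \<in> \<int>"
    and supp: "\<forall>j\<in>{..<n} - \<sigma>. x j = 0"
  shows "group_solves A c d n \<sigma> b"
proof -
  define xi where "xi j = \<lfloor>x j\<rfloor>" for j
  have xi: "of_int (xi j) = x j" for j
    using int by (auto simp: xi_def elim: Ints_cases)
  have xi_nonneg: "xi j \<ge> 0" for j
    using feas xi[of j] by (cases "j < n") (auto simp: lp_feasible_def xi_def)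
  have "(\<Sum>j<n. A i j * xi j) = b i" if "i < d" for i
  proof -
    have "real_of_int (\<Sum>j<n. A i j * xi j) = (\<Sum>j<n. of_int (A i j) * x j)" by (simp add: xi)
    also have "\<dots> = of_int (b i)" using feas that by (simp add: lp_feasible_def)
    finally show ?thesis by linarith
  qed
  then have gf: "group_feasible A d n \<sigma> b xi"
    using feas xi_nonneg by (simp add: group_feasible_def lp_feasible_def xi_def)
  have "(\<Sum>j\<in>{..<n} - \<sigma>. reduced_cost A c d \<sigma> j * of_int (xi j))
      \<le> (\<Sum>j\<in>{..<n} - \<sigma>. reduced_cost A c d \<sigma> j * of_int (x' j))"
    if "group_feasible A d n \<sigma> b x'" for x'
  proof -
    have "(\<Sum>j\<in>{..<n} - \<sigma>. reduced_cost A c d \<sigma> j * of_int (xi j)) = 0"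
      using supp by (simp add: xi)
    also have "\<dots> \<le> (\<Sum>j\<in>{..<n} - \<sigma>. reduced_cost A c d \<sigma> j * of_int (x' j))"
      using that reduced_cost_pos[OF mf rank]
      by (intro sum_nonneg) (auto simp: group_feasible_def less_imp_le)
    finally show ?thesis .
  qed
  with gf xi_nonneg show ?thesis by (auto simp: group_solves_def group_optimal_def)
qed

lemma NA_imp_coneA:
  assumes "b \<in> NA A d n"
  shows "(\<lambda>i. real_of_int (b i)) \<in> coneA A d n"
proof -
  obtain u where u: "ip_feasible A d n b u" using assms by (auto simp: NA_def)
  have "(\<Sum>j<n. of_int (A i j) * real (u j)) = real_of_int (b i)" if "i < d" for i
  proof -
    have "real_of_int (\<Sum>j<n. A i j * int (u j)) = real_of_int (b i)"
      using u that by (simp add: ip_feasible_def)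
    then show ?thesis by simp
  qed
  then have "lp_feasible A d n (\<lambda>i. real_of_int (b i)) (\<lambda>j. real (u j))"
    using u by (simp add: lp_feasible_def ip_feasible_def)
  then show ?thesis by (auto simp: coneA_def)
qed

theorem corollary3p4:
  fixes A :: "nat \<Rightarrow> nat \<Rightarrow> int" and c :: "nat \<Rightarrow> int" and d n :: nat
  assumes rank: "full_row_rank A d n"
    and pointed: "pointed_cone A d n"
    and kernel: "\<forall>x. lp_feasible A d n (\<lambda>_. 0) x \<longrightarrow> (\<forall>j. x j = 0)"
    and lattice: "\<forall>b::nat \<Rightarrow> int. \<exists>x::nat \<Rightarrow> int. \<forall>i<d. (\<Sum>j<n. A i j * x j) = b i"
    and generic: "generic_cost A c d n"
    and tdi: "TDI A c d n"
  shows "gomory_family A c d n"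
  unfolding gomory_family_def
proof
  fix b assume "b \<in> NA A d n"
  then obtain x where opt: "lp_optimal A c d n (\<lambda>i. real_of_int (b i)) x" and int: "\<forall>j. x j \<in> \<int>"
    using NA_imp_coneA tdi unfolding TDI_def by blast
  obtain \<sigma> where mf: "maximal_face A c d n \<sigma>" and supp: "\<forall>j\<in>{..<n} - \<sigma>. x j = 0"
    using lp_optimal_support_in_maximal_face[OF opt] by blast
  have "group_solves A c d n \<sigma> b"
    using group_solves_if_integral_lp_feasible[OF mf rank _ int supp] opt
    by (simp add: lp_optimal_def)
  with mf show "\<exists>\<sigma>. maximal_face A c d n \<sigma> \<and> group_solves A c d n \<sigma> b" by blast
qed

end
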